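(* Let $\mathbb{T}^2=\mathbb{R}^2/\mathbb{Z}^2$ with area form $\mu$, let $c>0$, and equip the group $\mathrm{Diff}_{\mu,\mathrm{ex}}(\mathbb{T}^2)$ of exact volumorphisms with the right-invariant metric given at the identity by $\langle\!\langle u,v\rangle\!\rangle=c\int_{\mathbb{T}^2}\langle du^\flat,dv^\flat\rangle\,d\mu$. Then the sectional curvature can assume both signs: there exist $u,v$ in the Lie algebra with $\langle\!\langle R(u,v)v,u\rangle\!\rangle>0$ and others with $\langle\!\langle R(u,v)v,u\rangle\!\rangle<0$ (among fields of the form $u=\mathrm{sgrad}\cos(jx+ky)$, $v=\mathrm{sgrad}\cos(lx+my)$, depending on $(j,k)$ and $(l,m)$).
   Context: $\mathrm{Diff}_{\mu,\mathrm{ex}}(\mathbb{T}^2)$ consists of symplectic (area-preserving) diffeomorphisms preserving the center of mass; its Lie algebra consists of Hamiltonian fields $\mathrm{sgrad} f=-f_y\partial_x+f_x\partial_y$. $d$ is the exterior derivative and $\flat$ the index-lowering isomorphism of the flat metric; $R$ is the curvature tensor of the Levi-Civita connection at the identity. *)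

theory Defs
  imports "HOL-Analysis.Analysis"
begin

text \<open>Points of the plane are pairs (x,y); the torus T^2 = R^2/Z^2 is modelled by
  functions on R^2 that are 1-periodic in both variables.\<close>

type_synonym pt = "real \<times> real"
type_synonym vfield = "pt \<Rightarrow> pt"

definition dx :: "(pt \<Rightarrow> real) \<Rightarrow> pt \<Rightarrow> real" where
  "dx f p = deriv (\<lambda>t. f (t, snd p)) (fst p)"

definition dy :: "(pt \<Rightarrow> real) \<Rightarrow> pt \<Rightarrow> real" where
  "dy f p = deriv (\<lambda>t. f (fst p, t)) (snd p)"

fun dpart :: "bool list \<Rightarrow> (pt \<Rightarrow> real) \<Rightarrow> pt \<Rightarrow> real" where
  "dpart [] f = f"
| "dpart (b # bs) f = (if b then dx else dy) (dpart bs f)"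

definition smooth2 :: "(pt \<Rightarrow> real) \<Rightarrow> bool" where
  "smooth2 f \<longleftrightarrow> (\<forall>bs. continuous_on UNIV (dpart bs f) \<and> (\<forall>p. dpart bs f differentiable at p))"

definition periodic2 :: "(pt \<Rightarrow> real) \<Rightarrow> bool" where
  "periodic2 f \<longleftrightarrow> (\<forall>x y. f (x + 1, y) = f (x, y) \<and> f (x, y + 1) = f (x, y))"

definition sgrad :: "(pt \<Rightarrow> real) \<Rightarrow> vfield" where
  "sgrad f = (\<lambda>p. (- dy f p, dx f p))"

text \<open>Lie algebra of Diff_{mu,ex}(T^2): Hamiltonian fields of smooth functions on T^2.\<close>
definition liealg :: "vfield set" where
  "liealg = {u. \<exists>f. smooth2 f \<and> periodic2 f \<and> u = sgrad f}"

definition vbracket :: "vfield \<Rightarrow> vfield \<Rightarrow> vfield" where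
  "vbracket u v = (\<lambda>p.
     (fst (u p) * dx (fst \<circ> v) p + snd (u p) * dy (fst \<circ> v) p
        - fst (v p) * dx (fst \<circ> u) p - snd (v p) * dy (fst \<circ> u) p,
      fst (u p) * dx (snd \<circ> v) p + snd (u p) * dy (snd \<circ> v) p
        - fst (v p) * dx (snd \<circ> u) p - snd (v p) * dy (snd \<circ> u) p))"

text \<open>d(u^flat) = (d_x u_2 - d_y u_1) dx/\dy; the flat metric gives <dx/\dy,dx/\dy> = 1.\<close>
definition curl :: "vfield \<Rightarrow> pt \<Rightarrow> real" where
  "curl u p = dx (snd \<circ> u) p - dy (fst \<circ> u) p"

definition metric :: "real \<Rightarrow> vfield \<Rightarrow> vfield \<Rightarrow> real" where
  "metric c u v = c * integral (cbox (0,0) (1,1)) (\<lambda>p. curl u p * curl v p)"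

text \<open>Levi-Civita connection at the identity of the right-invariant metric (Koszul formula
  for right-invariant fields, whose bracket is the vector field bracket).\<close>
definition LC :: "real \<Rightarrow> vfield \<Rightarrow> vfield \<Rightarrow> vfield" where
  "LC c u v = (THE w. w \<in> liealg \<and>
     (\<forall>z\<in>liealg. 2 * metric c w z =
        metric c (vbracket u v) z - metric c (vbracket u z) v - metric c (vbracket v z) u))"

definition curv :: "real \<Rightarrow> vfield \<Rightarrow> vfield \<Rightarrow> vfield \<Rightarrow> vfield" where
  "curv c u v w = LC c u (LC c v w) - LC c v (LC c u w) - LC c (vbracket u v) w"

definition cosmode :: "int \<Rightarrow> int \<Rightarrow> pt \<Rightarrow> real" where
  "cosmode j k = (\<lambda>(x, y). cos (2 * pi * (of_int j * x + of_int k * y)))"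

end

theory Submission
  imports Defs
begin

text \<open>For Hamiltonian fields u = sgrad a, v = sgrad b on the torus one has [u, v] = sgrad {a, b}
  (Poisson bracket) and <<u, v>> = c \<integral> \<Delta>a \<Delta>b. Integrating the Koszul formula by parts
  shows that \<nabla>_u v = sgrad \<psi> where 2 \<Delta>\<Delta>\<psi> = \<Delta>\<Delta>{a, b} + {a, \<Delta>\<Delta>b} + {b, \<Delta>\<Delta>a}, and \<psi> is
  unique up to a constant because \<Delta> only annihilates constants. For trigonometric
  polynomials this equation is solved in closed form, so <<R(u, v)v, u>> is an explicit
  multiple of c (2\<pi>)^8 for cosine modes a, b: it is -1/2 for the frequencies (1, 0), (0, 1)
  and 4192/169 for (0, 2), (1, 3). The required identities between trigonometric polynomials
  are decided by expanding products with the product-to-sum formulas and comparing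
  normalised coefficients.\<close>

section \<open>Partial derivatives and smooth functions\<close>

lemma dx_eqI: "((\<lambda>t. f (t, snd p)) has_real_derivative D) (at (fst p)) \<Longrightarrow> dx f p = D"
  unfolding dx_def by (rule DERIV_imp_deriv)

lemma dy_eqI: "((\<lambda>t. f (fst p, t)) has_real_derivative D) (at (snd p)) \<Longrightarrow> dy f p = D"
  unfolding dy_def by (rule DERIV_imp_deriv)

lemma has_real_derivative_dx:
  assumes "f differentiable at p"
  shows "((\<lambda>t. f (t, snd p)) has_real_derivative dx f p) (at (fst p))"
proof -
  have "(f \<circ> (\<lambda>t. (t, snd p))) differentiable at (fst p)"
    using assms by (intro differentiable_chain_at derivative_intros) auto
  thus ?thesis unfolding dx_def by (simp add: o_def DERIV_deriv_iff_real_differentiable)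
qed

lemma has_real_derivative_dy:
  assumes "f differentiable at p"
  shows "((\<lambda>t. f (fst p, t)) has_real_derivative dy f p) (at (snd p))"
proof -
  have "(f \<circ> (\<lambda>t. (fst p, t))) differentiable at (snd p)"
    using assms by (intro differentiable_chain_at derivative_intros) auto
  thus ?thesis unfolding dy_def by (simp add: o_def DERIV_deriv_iff_real_differentiable)
qed

lemma dpart_append_dx: "dpart (bs @ [True]) f = dpart bs (dx f)"
  and dpart_append_dy: "dpart (bs @ [False]) f = dpart bs (dy f)"
  by (induction bs) auto

lemma smooth2_dx: "smooth2 f \<Longrightarrow> smooth2 (dx f)"
  unfolding smooth2_def by (metis dpart_append_dx)

lemma smooth2_dy: "smooth2 f \<Longrightarrow> smooth2 (dy f)"
  unfolding smooth2_def by (metis dpart_append_dy)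

lemma smooth2_continuous_on: "smooth2 f \<Longrightarrow> continuous_on A f"
  unfolding smooth2_def by (metis dpart.simps(1) continuous_on_subset subset_UNIV)

lemma smooth2_differentiable: "smooth2 f \<Longrightarrow> f differentiable at p"
  unfolding smooth2_def by (metis dpart.simps(1))

lemma smooth2_has_real_derivative_dx:
  "smooth2 f \<Longrightarrow> ((\<lambda>t. f (t, snd p)) has_real_derivative dx f p) (at (fst p))"
  by (rule has_real_derivative_dx[OF smooth2_differentiable])

lemma smooth2_has_real_derivative_dy:
  "smooth2 f \<Longrightarrow> ((\<lambda>t. f (fst p, t)) has_real_derivative dy f p) (at (snd p))"
  by (rule has_real_derivative_dy[OF smooth2_differentiable])

lemma smooth2_coinduct:
  assumes "f \<in> C"
    and closed: "\<And>g. g \<in> C \<Longrightarrow> dx g \<in> C \<and> dy g \<in> C"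
    and differentiable: "\<And>g p. g \<in> C \<Longrightarrow> g differentiable at p"
  shows "smooth2 f"
proof -
  have "dpart bs f \<in> C" for bs
    by (induction bs) (auto simp: assms(1) closed)
  then show ?thesis
    unfolding smooth2_def
    by (auto intro: differentiable_imp_continuous_on differentiable_at_imp_differentiable_on differentiable)
qed

text \<open>By the Leibniz rule, sums of products of smooth functions form a class closed under dx and
  dy, so smooth2_coinduct shows that smoothness is preserved by multiplication.\<close>
definition sum_prods :: "((pt \<Rightarrow> real) \<times> (pt \<Rightarrow> real)) list \<Rightarrow> pt \<Rightarrow> real" where
  "sum_prods L p = (\<Sum>(g, k)\<leftarrow>L. g p * k p)"

definition leibniz :: "((pt \<Rightarrow> real) \<Rightarrow> pt \<Rightarrow> real) \<Rightarrow>
    ((pt \<Rightarrow> real) \<times> (pt \<Rightarrow> real)) list \<Rightarrow> ((pt \<Rightarrow> real) \<times> (pt \<Rightarrow> real)) list" where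
  "leibniz D L = concat (map (\<lambda>(g, k). [(D g, k), (g, D k)]) L)"

abbreviation smooth_pairs :: "((pt \<Rightarrow> real) \<times> (pt \<Rightarrow> real)) list \<Rightarrow> bool" where
  "smooth_pairs L \<equiv> \<forall>(g, k)\<in>set L. smooth2 g \<and> smooth2 k"

lemma sum_prods_simps [simp]:
  "sum_prods [] p = 0" "sum_prods ((g, k) # L) p = g p * k p + sum_prods L p"
  by (auto simp: sum_prods_def)

lemma has_real_derivative_sum_prods_x:
  assumes "smooth_pairs L"
  shows "((\<lambda>t. sum_prods L (t, snd p)) has_real_derivative sum_prods (leibniz dx L) p) (at (fst p))"
  using assms
proof (induction L)
  case (Cons a L)
  obtain g k where a: "a = (g, k)" by force
  have "((\<lambda>t. g (t, snd p) * k (t, snd p) + sum_prods L (t, snd p)) has_real_derivative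
      (dx g p * k p + g p * dx k p) + sum_prods (leibniz dx L) p) (at (fst p))"
    using Cons a DERIV_mult'[OF smooth2_has_real_derivative_dx[of g p] smooth2_has_real_derivative_dx[of k p]]
    by (intro DERIV_add) (auto simp: add.commute)
  then show ?case by (simp add: a leibniz_def algebra_simps)
qed (simp add: leibniz_def)

lemma has_real_derivative_sum_prods_y:
  assumes "smooth_pairs L"
  shows "((\<lambda>t. sum_prods L (fst p, t)) has_real_derivative sum_prods (leibniz dy L) p) (at (snd p))"
  using assms
proof (induction L)
  case (Cons a L)
  obtain g k where a: "a = (g, k)" by force
  have "((\<lambda>t. g (fst p, t) * k (fst p, t) + sum_prods L (fst p, t)) has_real_derivative
      (dy g p * k p + g p * dy k p) + sum_prods (leibniz dy L) p) (at (snd p))"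
    using Cons a DERIV_mult'[OF smooth2_has_real_derivative_dy[of g p] smooth2_has_real_derivative_dy[of k p]]
    by (intro DERIV_add) (auto simp: add.commute)
  then show ?case by (simp add: a leibniz_def algebra_simps)
qed (simp add: leibniz_def)

lemma smooth_pairs_leibniz:
  "smooth_pairs L \<Longrightarrow> (\<And>f. smooth2 f \<Longrightarrow> smooth2 (D f)) \<Longrightarrow> smooth_pairs (leibniz D L)"
  by (auto simp: leibniz_def)

lemma smooth2_sum_prods:
  assumes "smooth_pairs L"
  shows "smooth2 (sum_prods L)"
proof (rule smooth2_coinduct[where C = "{sum_prods L | L. smooth_pairs L}"])
  fix g assume "g \<in> {sum_prods L | L. smooth_pairs L}"
  then obtain M where M: "smooth_pairs M" and g: "g = sum_prods M" by blast
  have "dx g = sum_prods (leibniz dx M)" "dy g = sum_prods (leibniz dy M)"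
    unfolding g using M
    by (auto intro!: dx_eqI dy_eqI has_real_derivative_sum_prods_x has_real_derivative_sum_prods_y)
  then show "dx g \<in> {sum_prods L | L. smooth_pairs L} \<and> dy g \<in> {sum_prods L | L. smooth_pairs L}"
    using M smooth_pairs_leibniz smooth2_dx smooth2_dy by blast
  show "g differentiable at p" for p
    unfolding g using M
  proof (induction M)
    case (Cons a M)
    obtain h k where a: "a = (h, k)" by force
    have "sum_prods (a # M) = (\<lambda>x. h x * k x + sum_prods M x)"
      by (simp add: a fun_eq_iff)
    with Cons a show ?case by (simp add: smooth2_differentiable)
  qed (simp add: sum_prods_def[abs_def])
qed (use assms in blast)

lemma smooth2_mult: assumes "smooth2 f" "smooth2 g" shows "smooth2 (\<lambda>p. f p * g p)"
  using smooth2_sum_prods[of "[(f, g)]"] assms by (simp add: sum_prods_def[abs_def])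

lemma smooth2_const: "smooth2 (\<lambda>p. c)"
proof -
  have "dx (\<lambda>p. a) = (\<lambda>p. b) \<and> dy (\<lambda>p. a) = (\<lambda>p. b)" if "b = 0" for a b :: real
    using that by (auto simp: fun_eq_iff intro: dx_eqI dy_eqI)
  then show ?thesis
    by (intro smooth2_coinduct[where C = "range (\<lambda>a p. a)"]) auto
qed

lemma smooth2_add: assumes "smooth2 f" "smooth2 g" shows "smooth2 (\<lambda>p. f p + g p)"
  using smooth2_sum_prods[of "[(f, \<lambda>p. 1), (g, \<lambda>p. 1)]"] assms smooth2_const
  by (simp add: sum_prods_def[abs_def])

lemma smooth2_cmult: "smooth2 f \<Longrightarrow> smooth2 (\<lambda>p. c * f p)"
  using smooth2_mult[OF smooth2_const] .

lemma smooth2_uminus: "smooth2 f \<Longrightarrow> smooth2 (\<lambda>p. - f p)"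
  using smooth2_cmult[of f "-1"] by simp

lemma smooth2_diff: "smooth2 f \<Longrightarrow> smooth2 g \<Longrightarrow> smooth2 (\<lambda>p. f p - g p)"
  using smooth2_add[OF _ smooth2_uminus] by simp

lemma dx_diff: "smooth2 f \<Longrightarrow> smooth2 g \<Longrightarrow> dx (\<lambda>p. f p - g p) = (\<lambda>p. dx f p - dx g p)"
  by (rule ext, rule dx_eqI, intro DERIV_diff smooth2_has_real_derivative_dx)

lemma dy_diff: "smooth2 f \<Longrightarrow> smooth2 g \<Longrightarrow> dy (\<lambda>p. f p - g p) = (\<lambda>p. dy f p - dy g p)"
  by (rule ext, rule dy_eqI, intro DERIV_diff smooth2_has_real_derivative_dy)

lemma dx_uminus: "smooth2 f \<Longrightarrow> dx (\<lambda>p. - f p) = (\<lambda>p. - dx f p)"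
  by (rule ext, rule dx_eqI, intro DERIV_minus smooth2_has_real_derivative_dx)

lemma dy_uminus: "smooth2 f \<Longrightarrow> dy (\<lambda>p. - f p) = (\<lambda>p. - dy f p)"
  by (rule ext, rule dy_eqI, intro DERIV_minus smooth2_has_real_derivative_dy)

lemma dx_mult: "smooth2 f \<Longrightarrow> smooth2 g \<Longrightarrow> dx (\<lambda>p. f p * g p) = (\<lambda>p. dx f p * g p + f p * dx g p)"
  using DERIV_mult'[OF smooth2_has_real_derivative_dx smooth2_has_real_derivative_dx]
  by (intro ext dx_eqI) (simp add: add.commute)

lemma dy_mult: "smooth2 f \<Longrightarrow> smooth2 g \<Longrightarrow> dy (\<lambda>p. f p * g p) = (\<lambda>p. dy f p * g p + f p * dy g p)"
  using DERIV_mult'[OF smooth2_has_real_derivative_dy smooth2_has_real_derivative_dy]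
  by (intro ext dy_eqI) (simp add: add.commute)

lemma periodic2_dx:
  assumes "periodic2 f" "smooth2 f"
  shows "periodic2 (dx f)"
  unfolding periodic2_def
proof (intro allI conjI)
  fix x y
  have "((\<lambda>t. f (t, y)) has_real_derivative dx f (x + 1, y)) (at (x + 1))"
    using smooth2_has_real_derivative_dx[OF assms(2), of "(x + 1, y)"] by simp
  hence "((\<lambda>t. f (t + 1, y)) has_real_derivative dx f (x + 1, y)) (at x)"
    by (simp add: DERIV_shift)
  moreover have "(\<lambda>t. f (t + 1, y)) = (\<lambda>t. f (t, y))"
    using assms(1) unfolding periodic2_def by auto
  ultimately show "dx f (x + 1, y) = dx f (x, y)"
    by (intro dx_eqI[symmetric]) simp
  show "dx f (x, y + 1) = dx f (x, y)"
    using assms(1) unfolding periodic2_def dx_def by simp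
qed

lemma periodic2_dy:
  assumes "periodic2 f" "smooth2 f"
  shows "periodic2 (dy f)"
  unfolding periodic2_def
proof (intro allI conjI)
  fix x y
  have "((\<lambda>t. f (x, t)) has_real_derivative dy f (x, y + 1)) (at (y + 1))"
    using smooth2_has_real_derivative_dy[OF assms(2), of "(x, y + 1)"] by simp
  hence "((\<lambda>t. f (x, t + 1)) has_real_derivative dy f (x, y + 1)) (at y)"
    by (simp add: DERIV_shift)
  moreover have "(\<lambda>t. f (x, t + 1)) = (\<lambda>t. f (x, t))"
    using assms(1) unfolding periodic2_def by auto
  ultimately show "dy f (x, y + 1) = dy f (x, y)"
    by (intro dy_eqI[symmetric]) simp
  show "dy f (x + 1, y) = dy f (x, y)"
    using assms(1) unfolding periodic2_def dy_def by simp
qed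

lemma periodic2_shift_int:
  assumes "periodic2 f"
  shows "f (x + of_int m, y + of_int n) = f (x, y)"
proof -
  have "f (x + of_int m, y) = f (x, y)" for m :: int and x y
  proof (induction m arbitrary: x rule: int_induct[where k = 0])
    case (step1 i)
    then show ?case using assms unfolding periodic2_def by (metis add.assoc of_int_add of_int_1)
  next
    case (step2 i)
    then show ?case using assms unfolding periodic2_def
      by (metis diff_add_cancel of_int_diff of_int_1 add_diff_eq)
  qed simp
  moreover have "f (x, y + of_int n) = f (x, y)" for n :: int and x y
  proof (induction n arbitrary: y rule: int_induct[where k = 0])
    case (step1 i)
    then show ?case using assms unfolding periodic2_def by (metis add.assoc of_int_add of_int_1)
  next
    case (step2 i)
    then show ?case using assms unfolding periodic2_def
      by (metis diff_add_cancel of_int_diff of_int_1 add_diff_eq)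
  qed simp
  ultimately show ?thesis by simp
qed

lemma integral_dy_segment:
  assumes "smooth2 f" "c \<le> y"
  shows "integral {c..y} (\<lambda>t. dy f (x, t)) = f (x, y) - f (x, c)"
proof -
  have "((\<lambda>t. dy f (x, t)) has_integral f (x, y) - f (x, c)) {c..y}"
    using assms smooth2_has_real_derivative_dy[OF assms(1), of "(x, _)"]
    by (intro fundamental_theorem_of_calculus)
      (auto simp: has_real_derivative_iff_has_vector_derivative has_vector_derivative_at_within)
  then show ?thesis by (rule integral_unique)
qed

text \<open>Schwarz's theorem: differentiate f (x, y) - f (x, c) = integral of dy f (x, -) over [c, y]
  under the integral sign in x, then in y by the fundamental theorem of calculus.\<close>
lemma dx_dy_commute:
  assumes f: "smooth2 f"
  shows "dx (dy f) = dy (dx f)"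
proof
  fix p :: pt
  obtain x0 y0 where p: "p = (x0, y0)" by force
  define c where "c = y0 - 1"
  let ?g = "dx (dy f)"
  have g_cont: "continuous_on A ?g" for A
    by (intro smooth2_continuous_on smooth2_dx smooth2_dy f)
  have primitive: "dx f (x0, y) = dx f (x0, c) + integral {c..y} (\<lambda>t. ?g (x0, t))" if "c \<le> y" for y
  proof -
    have "((\<lambda>x. integral (cbox c y) (\<lambda>t. dy f (x, t))) has_field_derivative
        integral (cbox c y) (\<lambda>t. ?g (x0, t))) (at x0 within UNIV)"
    proof (rule leibniz_rule_field_derivative)
      show "((\<lambda>x. dy f (x, t)) has_field_derivative ?g (x, t)) (at x within UNIV)" for x t
        using smooth2_has_real_derivative_dx[OF smooth2_dy[OF f], of "(x, t)"] by simp
      show "(\<lambda>t. dy f (x, t)) integrable_on cbox c y" for x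
        by (intro integrable_continuous continuous_on_compose2[OF smooth2_continuous_on[OF smooth2_dy[OF f]]]
            continuous_intros) auto
    next
      show "continuous_on (UNIV \<times> cbox c y) (\<lambda>(x, t). ?g (x, t))" using g_cont by simp
    qed auto
    moreover have "(\<lambda>x. integral (cbox c y) (\<lambda>t. dy f (x, t))) = (\<lambda>x. f (x, y) - f (x, c))"
      using integral_dy_segment[OF f that] by (simp add: cbox_interval)
    ultimately have "((\<lambda>x. f (x, y) - f (x, c)) has_real_derivative
        integral {c..y} (\<lambda>t. ?g (x0, t))) (at x0)"
      by (simp add: cbox_interval)
    moreover have "((\<lambda>x. f (x, y) - f (x, c)) has_real_derivative dx f (x0, y) - dx f (x0, c)) (at x0)"
      using smooth2_has_real_derivative_dx[OF f, of "(x0, y)"] smooth2_has_real_derivative_dx[OF f, of "(x0, c)"]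
      by (intro DERIV_diff) auto
    ultimately show ?thesis by (auto dest: DERIV_unique)
  qed
  have "((\<lambda>y. integral {c..y} (\<lambda>t. ?g (x0, t))) has_real_derivative ?g (x0, y0)) (at y0 within {c..y0 + 1})"
    by (intro integral_has_real_derivative continuous_on_compose2[OF g_cont] continuous_intros)
      (auto simp: c_def)
  moreover have "at y0 within {c..y0 + 1} = at y0"
    by (intro at_within_interior) (simp add: c_def)
  ultimately have "((\<lambda>y. dx f (x0, c) + integral {c..y} (\<lambda>t. ?g (x0, t))) has_real_derivative ?g (x0, y0)) (at y0)"
    using DERIV_add[OF DERIV_const] by fastforce
  then have "((\<lambda>y. dx f (x0, y)) has_real_derivative ?g (x0, y0)) (at y0)"
  proof (rule has_field_derivative_transform_within_open)
    show "y0 \<in> {c<..}" "open {c<..}" by (auto simp: c_def)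
    show "dx f (x0, c) + integral {c..y} (\<lambda>t. ?g (x0, t)) = dx f (x0, y)" if "y \<in> {c<..}" for y
      using primitive[of y] that by simp
  qed
  then show "?g p = dy (dx f) p"
    by (intro dy_eqI[symmetric]) (simp add: p)
qed

section \<open>Integration over the torus\<close>

definition torus_smooth :: "(pt \<Rightarrow> real) \<Rightarrow> bool" where
  "torus_smooth f \<longleftrightarrow> smooth2 f \<and> periodic2 f"

lemma torus_smooth_smooth2: "torus_smooth f \<Longrightarrow> smooth2 f"
  by (simp add: torus_smooth_def)

lemma torus_smooth_dx: "torus_smooth f \<Longrightarrow> torus_smooth (dx f)"
  and torus_smooth_dy: "torus_smooth f \<Longrightarrow> torus_smooth (dy f)"
  by (simp_all add: torus_smooth_def smooth2_dx smooth2_dy periodic2_dx periodic2_dy)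

lemma torus_smooth_add: "torus_smooth f \<Longrightarrow> torus_smooth g \<Longrightarrow> torus_smooth (\<lambda>p. f p + g p)"
  and torus_smooth_diff: "torus_smooth f \<Longrightarrow> torus_smooth g \<Longrightarrow> torus_smooth (\<lambda>p. f p - g p)"
  and torus_smooth_mult: "torus_smooth f \<Longrightarrow> torus_smooth g \<Longrightarrow> torus_smooth (\<lambda>p. f p * g p)"
  and torus_smooth_cmult: "torus_smooth f \<Longrightarrow> torus_smooth (\<lambda>p. c * f p)"
  by (simp_all add: torus_smooth_def smooth2_add
      smooth2_diff smooth2_mult smooth2_cmult periodic2_def)

lemmas torus_smooth_intros = torus_smooth_dx torus_smooth_dy torus_smooth_add torus_smooth_diff
  torus_smooth_mult torus_smooth_cmult

abbreviation unit_square :: "pt set" where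
  "unit_square \<equiv> cbox (0, 0) (1, 1)"

lemma torus_smooth_integrable: "torus_smooth f \<Longrightarrow> f integrable_on unit_square"
  by (intro integrable_continuous smooth2_continuous_on torus_smooth_smooth2)

lemma integral_add_torus:
  "torus_smooth f \<Longrightarrow> torus_smooth g \<Longrightarrow>
    integral unit_square (\<lambda>p. f p + g p) = integral unit_square f + integral unit_square g"
  by (intro integral_add torus_smooth_integrable)

lemma integral_diff_torus:
  "torus_smooth f \<Longrightarrow> torus_smooth g \<Longrightarrow>
    integral unit_square (\<lambda>p. f p - g p) = integral unit_square f - integral unit_square g"
  by (intro integral_diff torus_smooth_integrable)

lemma integral_periodic_derivative_eq_0:
  assumes "\<And>t. (h has_real_derivative h' t) (at t)" "continuous_on {0..1} h'" "h 1 = h 0"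
  shows "integral {0..1} h' = 0"
proof -
  have "(h' has_integral (h 1 - h 0)) {0..1}"
    using assms(1) by (intro fundamental_theorem_of_calculus)
      (auto simp: has_real_derivative_iff_has_vector_derivative has_vector_derivative_at_within)
  then show ?thesis using assms(3) by (simp add: integral_unique)
qed

lemma integral_dy_eq_0:
  assumes "torus_smooth f"
  shows "integral unit_square (dy f) = 0"
proof -
  have f: "smooth2 f" "periodic2 f" using assms by (auto simp: torus_smooth_def)
  have "integral {0..1} (\<lambda>y. dy f (x, y)) = 0" for x
  proof (rule integral_periodic_derivative_eq_0)
    show "((\<lambda>y. f (x, y)) has_real_derivative dy f (x, t)) (at t)" for t
      using smooth2_has_real_derivative_dy[OF f(1), of "(x, t)"] by simp
    show "continuous_on {0..1} (\<lambda>y. dy f (x, y))"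
      by (intro continuous_on_compose2[OF smooth2_continuous_on[OF smooth2_dy[OF f(1)]]]
          continuous_intros) auto
    show "f (x, 1) = f (x, 0)" using f(2) unfolding periodic2_def by (metis add_0)
  qed
  then show ?thesis
    using integral_prod_continuous[OF smooth2_continuous_on[OF smooth2_dy[OF f(1)]]]
    by (simp add: cbox_interval)
qed

lemma integral_dx_eq_0:
  assumes "torus_smooth f"
  shows "integral unit_square (dx f) = 0"
proof -
  have f: "smooth2 f" "periodic2 f" using assms by (auto simp: torus_smooth_def)
  have cont: "continuous_on unit_square (dx f)"
    by (rule smooth2_continuous_on[OF smooth2_dx[OF f(1)]])
  have "integral {0..1} (\<lambda>x. dx f (x, y)) = 0" for y
  proof (rule integral_periodic_derivative_eq_0)
    show "((\<lambda>x. f (x, y)) has_real_derivative dx f (t, y)) (at t)" for t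
      using smooth2_has_real_derivative_dx[OF f(1), of "(t, y)"] by simp
    show "continuous_on {0..1} (\<lambda>x. dx f (x, y))"
      by (intro continuous_on_compose2[OF smooth2_continuous_on[OF smooth2_dx[OF f(1)]]]
          continuous_intros) auto
    show "f (1, y) = f (0, y)" using f(2) unfolding periodic2_def by (metis add_0)
  qed
  moreover have "integral unit_square (dx f) =
      integral {0..1} (\<lambda>y. integral {0..1} (\<lambda>x. dx f (x, y)))"
    using integral_prod_continuous[OF cont]
      integral_swap_continuous[of 0 0 1 1 "\<lambda>x y. dx f (x, y)"] cont
    by (simp add: cbox_interval)
  ultimately show ?thesis by simp
qed

lemma integral_dx_mult:
  assumes "torus_smooth f" "torus_smooth g"
  shows "integral unit_square (\<lambda>p. dx f p * g p) = - integral unit_square (\<lambda>p. f p * dx g p)"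
proof -
  have "0 = integral unit_square (dx (\<lambda>p. f p * g p))"
    using integral_dx_eq_0[OF torus_smooth_mult[OF assms]] by simp
  also have "\<dots> = integral unit_square (\<lambda>p. dx f p * g p) + integral unit_square (\<lambda>p. f p * dx g p)"
    using assms by (simp add: dx_mult torus_smooth_smooth2 integral_add_torus torus_smooth_intros)
  finally show ?thesis by simp
qed

lemma integral_dy_mult:
  assumes "torus_smooth f" "torus_smooth g"
  shows "integral unit_square (\<lambda>p. dy f p * g p) = - integral unit_square (\<lambda>p. f p * dy g p)"
proof -
  have "0 = integral unit_square (dy (\<lambda>p. f p * g p))"
    using integral_dy_eq_0[OF torus_smooth_mult[OF assms]] by simp
  also have "\<dots> = integral unit_square (\<lambda>p. dy f p * g p) + integral unit_square (\<lambda>p. f p * dy g p)"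
    using assms by (simp add: dy_mult torus_smooth_smooth2 integral_add_torus torus_smooth_intros)
  finally show ?thesis by simp
qed

lemma periodic2_eq_0:
  assumes "periodic2 f" "\<And>p. p \<in> unit_square \<Longrightarrow> f p = 0"
  shows "f p = 0"
proof -
  obtain x y where p: "p = (x, y)" by force
  have "f p = f (frac x + of_int \<lfloor>x\<rfloor>, frac y + of_int \<lfloor>y\<rfloor>)"
    by (simp add: p frac_def)
  also have "\<dots> = f (frac x, frac y)"
    by (rule periodic2_shift_int[OF assms(1)])
  also have "\<dots> = 0"
    using assms(2) frac_lt_1[of x] frac_lt_1[of y] frac_ge_0[of x] frac_ge_0[of y]
    by (simp add: less_imp_le)
  finally show ?thesis .
qed

lemma integral_square_eq_0:
  assumes "torus_smooth f" "integral unit_square (\<lambda>p. f p * f p) = 0"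
  shows "f p = 0"
proof (rule periodic2_eq_0)
  show "periodic2 f" using assms(1) by (simp add: torus_smooth_def)
  have "box (0::pt) (1, 1) \<noteq> {}"
    using mem_box(1)[of "(1/2, 1/2)" "0::pt" "(1, 1)"] by (auto simp: Basis_prod_def)
  moreover have "continuous_on unit_square (\<lambda>p. f p * f p)"
    by (intro smooth2_continuous_on torus_smooth_smooth2 torus_smooth_mult assms(1))
  ultimately show "f q = 0" if "q \<in> unit_square" for q
    using integral_cbox_eq_0_iff[of "(0, 0)" "(1, 1)" "\<lambda>p. f p * f p"] assms(2) that
    by (simp add: zero_prod_def)
qed

section \<open>Hamiltonian fields and the Levi-Civita connection\<close>

definition laplace :: "(pt \<Rightarrow> real) \<Rightarrow> pt \<Rightarrow> real" where
  "laplace f p = dx (dx f) p + dy (dy f) p"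

definition poisson :: "(pt \<Rightarrow> real) \<Rightarrow> (pt \<Rightarrow> real) \<Rightarrow> pt \<Rightarrow> real" where
  "poisson f g p = dx f p * dy g p - dy f p * dx g p"

lemma torus_smooth_laplace: "torus_smooth f \<Longrightarrow> torus_smooth (laplace f)"
  unfolding laplace_def by (intro torus_smooth_intros)

lemma torus_smooth_poisson: "torus_smooth f \<Longrightarrow> torus_smooth g \<Longrightarrow> torus_smooth (poisson f g)"
  unfolding poisson_def by (intro torus_smooth_intros)

lemma laplace_diff:
  "smooth2 f \<Longrightarrow> smooth2 g \<Longrightarrow> laplace (\<lambda>p. f p - g p) = (\<lambda>p. laplace f p - laplace g p)"
  by (simp add: laplace_def fun_eq_iff dx_diff dy_diff smooth2_dx smooth2_dy)

lemma sgrad_diff: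
  "smooth2 f \<Longrightarrow> smooth2 g \<Longrightarrow> sgrad (\<lambda>p. f p - g p) = (\<lambda>p. sgrad f p - sgrad g p)"
  by (simp add: sgrad_def fun_eq_iff dx_diff dy_diff)

lemma curl_sgrad: "smooth2 f \<Longrightarrow> curl (sgrad f) = laplace f"
proof -
  have "snd \<circ> sgrad f = dx f" "fst \<circ> sgrad f = (\<lambda>p. - dy f p)"
    by (auto simp: sgrad_def)
  then show "smooth2 f \<Longrightarrow> ?thesis"
    by (auto simp: curl_def laplace_def dy_uminus smooth2_dy)
qed

lemma vbracket_sgrad:
  assumes "smooth2 f" "smooth2 g"
  shows "vbracket (sgrad f) (sgrad g) = sgrad (poisson f g)"
proof -
  have comp: "snd \<circ> sgrad h = dx h" "fst \<circ> sgrad h = (\<lambda>p. - dy h p)" for h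
    by (auto simp: sgrad_def)
  show ?thesis
    unfolding vbracket_def comp using assms
    by (simp add: sgrad_def poisson_def[abs_def] fun_eq_iff dx_uminus dy_uminus dx_diff dy_diff
        dx_mult dy_mult smooth2_dx smooth2_dy smooth2_mult dx_dy_commute algebra_simps)
qed

lemma integral_mult_laplace:
  assumes "torus_smooth f" "torus_smooth g"
  shows "integral unit_square (\<lambda>p. f p * laplace g p) =
    - integral unit_square (\<lambda>p. dx f p * dx g p + dy f p * dy g p)"
proof -
  have "integral unit_square (\<lambda>p. f p * laplace g p) =
      integral unit_square (\<lambda>p. dx (dx g) p * f p) + integral unit_square (\<lambda>p. dy (dy g) p * f p)"
    using assms by (simp add: laplace_def algebra_simps integral_add_torus[symmetric] torus_smooth_intros)
  also have "\<dots> = - integral unit_square (\<lambda>p. dx g p * dx f p) - integral unit_square (\<lambda>p. dy g p * dy f p)"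
    using assms by (simp add: integral_dx_mult integral_dy_mult torus_smooth_intros)
  also have "\<dots> = - integral unit_square (\<lambda>p. dx f p * dx g p + dy f p * dy g p)"
    using assms by (simp add: integral_add_torus torus_smooth_intros mult.commute)
  finally show ?thesis .
qed

lemma integral_laplace_symmetric:
  assumes "torus_smooth f" "torus_smooth g"
  shows "integral unit_square (\<lambda>p. f p * laplace g p) = integral unit_square (\<lambda>p. laplace f p * g p)"
  using integral_mult_laplace[OF assms] integral_mult_laplace[OF assms(2,1)]
  by (simp add: mult.commute add.commute)

lemma metric_sgrad:
  "smooth2 f \<Longrightarrow> smooth2 g \<Longrightarrow>
    metric c (sgrad f) (sgrad g) = c * integral unit_square (\<lambda>p. laplace f p * laplace g p)"
  by (simp add: metric_def curl_sgrad)

lemma metric_sgrad_bilaplace: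
  "torus_smooth f \<Longrightarrow> torus_smooth g \<Longrightarrow>
    metric c (sgrad f) (sgrad g) = c * integral unit_square (\<lambda>p. laplace (laplace f) p * g p)"
  by (simp add: metric_sgrad torus_smooth_smooth2 integral_laplace_symmetric[symmetric]
      torus_smooth_laplace)

lemma integral_poisson_mult:
  assumes a: "torus_smooth a" and h: "torus_smooth h" and g: "torus_smooth g"
  shows "integral unit_square (\<lambda>p. poisson a h p * g p) = - integral unit_square (\<lambda>p. h p * poisson a g p)"
proof -
  have sm: "smooth2 a" "smooth2 g" using a g by (auto simp: torus_smooth_smooth2)
  have "integral unit_square (\<lambda>p. poisson a h p * g p) =
      integral unit_square (\<lambda>p. dy h p * (dx a p * g p)) - integral unit_square (\<lambda>p. dx h p * (dy a p * g p))"
    using assms by (simp add: poisson_def algebra_simps integral_diff_torus[symmetric] torus_smooth_intros)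
  also have "\<dots> = - integral unit_square (\<lambda>p. h p * dy (\<lambda>p. dx a p * g p) p)
      + integral unit_square (\<lambda>p. h p * dx (\<lambda>p. dy a p * g p) p)"
    using assms by (simp add: integral_dx_mult integral_dy_mult torus_smooth_intros)
  also have "\<dots> = - integral unit_square (\<lambda>p. h p * dy (\<lambda>p. dx a p * g p) p - h p * dx (\<lambda>p. dy a p * g p) p)"
    using assms by (simp add: integral_diff_torus torus_smooth_intros)
  also have "(\<lambda>p. h p * dy (\<lambda>p. dx a p * g p) p - h p * dx (\<lambda>p. dy a p * g p) p) = (\<lambda>p. h p * poisson a g p)"
    using sm by (simp add: fun_eq_iff dx_mult dy_mult smooth2_dx smooth2_dy dx_dy_commute poisson_def algebra_simps)
  finally show ?thesis .
qed

lemma metric_vbracket_sgrad: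
  assumes "torus_smooth a" "torus_smooth h" "torus_smooth b"
  shows "metric c (vbracket (sgrad a) (sgrad h)) (sgrad b) =
    - c * integral unit_square (\<lambda>p. h p * poisson a (laplace (laplace b)) p)"
proof -
  have "metric c (vbracket (sgrad a) (sgrad h)) (sgrad b) = metric c (sgrad b) (sgrad (poisson a h))"
    using assms by (simp add: vbracket_sgrad torus_smooth_smooth2 metric_sgrad torus_smooth_poisson mult.commute)
  also have "\<dots> = c * integral unit_square (\<lambda>p. poisson a h p * laplace (laplace b) p)"
    using assms by (simp add: metric_sgrad_bilaplace torus_smooth_poisson mult.commute)
  finally show ?thesis
    using assms by (simp add: integral_poisson_mult torus_smooth_laplace)
qed

lemma grad_eq_0_if_integral_laplace_square_eq_0:
  assumes g: "torus_smooth g" and "integral unit_square (\<lambda>p. laplace g p * laplace g p) = 0"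
  shows "dx g p = 0" "dy g p = 0"
proof -
  have "laplace g p = 0" for p
    using integral_square_eq_0[OF torus_smooth_laplace[OF g]] assms(2) .
  then have "integral unit_square (\<lambda>p. dx g p * dx g p + dy g p * dy g p) = 0"
    using integral_mult_laplace[OF g g] by simp
  then have "integral unit_square (\<lambda>p. dx g p * dx g p) + integral unit_square (\<lambda>p. dy g p * dy g p) = 0"
    using g by (simp add: integral_add_torus torus_smooth_intros)
  moreover have "integral unit_square (\<lambda>p. dx g p * dx g p) \<ge> 0" "integral unit_square (\<lambda>p. dy g p * dy g p) \<ge> 0"
    using g by (auto intro!: integral_nonneg torus_smooth_integrable torus_smooth_intros)
  ultimately have "integral unit_square (\<lambda>p. dx g p * dx g p) = 0" "integral unit_square (\<lambda>p. dy g p * dy g p) = 0"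
    by linarith+
  then show "dx g p = 0" "dy g p = 0"
    using integral_square_eq_0 torus_smooth_dx[OF g] torus_smooth_dy[OF g] by blast+
qed

lemma sgrad_eqI_metric:
  assumes c: "c \<noteq> 0" and f: "torus_smooth f" and g: "torus_smooth g"
    and eq: "\<And>h. torus_smooth h \<Longrightarrow> metric c (sgrad f) (sgrad h) = metric c (sgrad g) (sgrad h)"
  shows "sgrad f = sgrad g"
proof -
  define h where "h = (\<lambda>p. f p - g p)"
  have h: "torus_smooth h" unfolding h_def using f g by (intro torus_smooth_intros)
  have "metric c (sgrad f) (sgrad h) - metric c (sgrad g) (sgrad h) =
      c * (integral unit_square (\<lambda>p. laplace f p * laplace h p)
        - integral unit_square (\<lambda>p. laplace g p * laplace h p))"
    using f g h by (simp add: metric_sgrad torus_smooth_smooth2 right_diff_distrib)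
  also have "\<dots> = c * integral unit_square (\<lambda>p. (laplace f p - laplace g p) * laplace h p)"
    using f g h by (simp add: left_diff_distrib integral_diff_torus torus_smooth_intros torus_smooth_laplace)
  also have "(\<lambda>p. (laplace f p - laplace g p) * laplace h p) = (\<lambda>p. laplace h p * laplace h p)"
    using f g by (simp add: h_def laplace_diff torus_smooth_smooth2)
  finally have "integral unit_square (\<lambda>p. laplace h p * laplace h p) = 0"
    using eq[OF h] c by simp
  then have "dx h p = 0 \<and> dy h p = 0" for p
    using grad_eq_0_if_integral_laplace_square_eq_0[OF h] by blast
  then show ?thesis
    using f g by (simp add: sgrad_def h_def fun_eq_iff dx_diff dy_diff torus_smooth_smooth2)
qed

lemma liealg_iff: "w \<in> liealg \<longleftrightarrow> (\<exists>f. torus_smooth f \<and> w = sgrad f)"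
  by (auto simp: liealg_def torus_smooth_def)

text \<open>Twice the stream function of \<nabla>_{sgrad a} sgrad b has this bi-Laplacian.\<close>
definition koszul_rhs :: "(pt \<Rightarrow> real) \<Rightarrow> (pt \<Rightarrow> real) \<Rightarrow> pt \<Rightarrow> real" where
  "koszul_rhs a b p = laplace (laplace (poisson a b)) p
     + poisson a (laplace (laplace b)) p + poisson b (laplace (laplace a)) p"

lemma koszul_sgrad:
  assumes a: "torus_smooth a" and b: "torus_smooth b" and h: "torus_smooth h"
  shows "metric c (vbracket (sgrad a) (sgrad b)) (sgrad h) - metric c (vbracket (sgrad a) (sgrad h)) (sgrad b)
      - metric c (vbracket (sgrad b) (sgrad h)) (sgrad a) =
    c * integral unit_square (\<lambda>p. koszul_rhs a b p * h p)"
proof -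
  have Lab: "torus_smooth (laplace (laplace (poisson a b)))" "torus_smooth (poisson a (laplace (laplace b)))"
    "torus_smooth (poisson b (laplace (laplace a)))"
    using a b by (auto intro!: torus_smooth_laplace torus_smooth_poisson)
  have "metric c (vbracket (sgrad a) (sgrad b)) (sgrad h) =
      c * integral unit_square (\<lambda>p. laplace (laplace (poisson a b)) p * h p)"
    using a b h by (simp add: vbracket_sgrad torus_smooth_smooth2 metric_sgrad_bilaplace torus_smooth_poisson)
  moreover have "integral unit_square (\<lambda>p. koszul_rhs a b p * h p) =
      integral unit_square (\<lambda>p. laplace (laplace (poisson a b)) p * h p)
      + integral unit_square (\<lambda>p. h p * poisson a (laplace (laplace b)) p)
      + integral unit_square (\<lambda>p. h p * poisson b (laplace (laplace a)) p)"
    using Lab h by (simp add: koszul_rhs_def algebra_simps integral_add_torus torus_smooth_intros)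
  ultimately show ?thesis
    using a b h by (simp add: metric_vbracket_sgrad algebra_simps)
qed

lemma LC_sgrad:
  assumes c: "c \<noteq> 0" and a: "torus_smooth a" and b: "torus_smooth b" and \<psi>: "torus_smooth \<psi>"
    and eq: "\<And>p. 2 * laplace (laplace \<psi>) p = koszul_rhs a b p"
  shows "LC c (sgrad a) (sgrad b) = sgrad \<psi>"
proof -
  have koszul: "2 * metric c (sgrad \<psi>) (sgrad h) =
      metric c (vbracket (sgrad a) (sgrad b)) (sgrad h) - metric c (vbracket (sgrad a) (sgrad h)) (sgrad b)
      - metric c (vbracket (sgrad b) (sgrad h)) (sgrad a)" if h: "torus_smooth h" for h
    using \<psi> h by (simp add: koszul_sgrad[OF a b h] metric_sgrad_bilaplace eq[symmetric] mult.assoc)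
  show ?thesis
    unfolding LC_def
  proof (rule the_equality)
    show "sgrad \<psi> \<in> liealg \<and> (\<forall>z\<in>liealg. 2 * metric c (sgrad \<psi>) z =
        metric c (vbracket (sgrad a) (sgrad b)) z - metric c (vbracket (sgrad a) z) (sgrad b)
        - metric c (vbracket (sgrad b) z) (sgrad a))"
      using \<psi> koszul by (auto simp: liealg_iff)
  next
    fix w
    assume w: "w \<in> liealg \<and> (\<forall>z\<in>liealg. 2 * metric c w z =
        metric c (vbracket (sgrad a) (sgrad b)) z - metric c (vbracket (sgrad a) z) (sgrad b)
        - metric c (vbracket (sgrad b) z) (sgrad a))"
    then obtain \<phi> where \<phi>: "torus_smooth \<phi>" and w_eq: "w = sgrad \<phi>" by (auto simp: liealg_iff)
    have "metric c (sgrad \<phi>) (sgrad h) = metric c (sgrad \<psi>) (sgrad h)" if h: "torus_smooth h" for h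
    proof -
      have "sgrad h \<in> liealg" using h by (auto simp: liealg_iff)
      with w have "2 * metric c (sgrad \<phi>) (sgrad h) = 2 * metric c (sgrad \<psi>) (sgrad h)"
        by (simp add: koszul[OF h] w_eq)
      then show ?thesis by simp
    qed
    then show "w = sgrad \<psi>"
      using sgrad_eqI_metric[OF c \<phi> \<psi>] w_eq by blast
  qed
qed

section \<open>Trigonometric polynomials\<close>

text \<open>A trigonometric polynomial is a list of terms (c, j, k, s), each standing for
  c * sin (2\<pi>(jx + ky)) if s and c * cos (2\<pi>(jx + ky)) otherwise.\<close>
type_synonym trig_term = "real \<times> int \<times> int \<times> bool"

definition phase :: "int \<Rightarrow> int \<Rightarrow> pt \<Rightarrow> real" where
  "phase j k p = 2 * pi * (of_int j * fst p + of_int k * snd p)"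

definition fourier_mode :: "int \<Rightarrow> int \<Rightarrow> bool \<Rightarrow> pt \<Rightarrow> real" where
  "fourier_mode j k s p = (if s then sin (phase j k p) else cos (phase j k p))"

fun trig_eval :: "trig_term list \<Rightarrow> pt \<Rightarrow> real" where
  "trig_eval [] p = 0"
| "trig_eval ((c, j, k, s) # P) p = c * fourier_mode j k s p + trig_eval P p"

fun term_dx :: "trig_term \<Rightarrow> trig_term" where
  "term_dx (c, j, k, s) =
    (if s then (2 * pi * of_int j * c, j, k, False) else (- (2 * pi * of_int j * c), j, k, True))"

fun term_dy :: "trig_term \<Rightarrow> trig_term" where
  "term_dy (c, j, k, s) =
    (if s then (2 * pi * of_int k * c, j, k, False) else (- (2 * pi * of_int k * c), j, k, True))"

fun term_scale :: "real \<Rightarrow> trig_term \<Rightarrow> trig_term" where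
  "term_scale a (c, j, k, s) = (a * c, j, k, s)"

text \<open>Product-to-sum formulas.\<close>
fun term_mult :: "trig_term \<Rightarrow> trig_term \<Rightarrow> trig_term list" where
  "term_mult (c, j, k, s) (d, l, m, r) =
    (if \<not> s \<and> \<not> r then [(c * d / 2, j + l, k + m, False), (c * d / 2, j - l, k - m, False)]
     else if s \<and> r then [(c * d / 2, j - l, k - m, False), (- (c * d / 2), j + l, k + m, False)]
     else if s then [(c * d / 2, j + l, k + m, True), (c * d / 2, j - l, k - m, True)]
     else [(c * d / 2, j + l, k + m, True), (- (c * d / 2), j - l, k - m, True)])"

definition trig_dx :: "trig_term list \<Rightarrow> trig_term list" where
  "trig_dx = map term_dx"

definition trig_dy :: "trig_term list \<Rightarrow> trig_term list" where
  "trig_dy = map term_dy"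

definition trig_scale :: "real \<Rightarrow> trig_term list \<Rightarrow> trig_term list" where
  "trig_scale a = map (term_scale a)"

definition trig_mult :: "trig_term list \<Rightarrow> trig_term list \<Rightarrow> trig_term list" where
  "trig_mult P Q = concat (map (\<lambda>t. concat (map (term_mult t) Q)) P)"

lemma trig_term_induct: "Q [] \<Longrightarrow> (\<And>c j k s L. Q L \<Longrightarrow> Q ((c, j, k, s) # L)) \<Longrightarrow> Q L"
  by (induction L) auto

lemma trig_eval_append: "trig_eval (P @ Q) p = trig_eval P p + trig_eval Q p"
  by (induction P rule: trig_term_induct) auto

lemma trig_eval_scale: "trig_eval (trig_scale a P) p = a * trig_eval P p"
  unfolding trig_scale_def by (induction P rule: trig_term_induct) (auto simp: algebra_simps)

lemma trig_eval_sum_list: "trig_eval P p = (\<Sum>t\<leftarrow>P. trig_eval [t] p)"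
  by (induction P rule: trig_term_induct) auto

lemma phase_add: "phase (j + l) (k + m) p = phase j k p + phase l m p"
  and phase_diff: "phase (j - l) (k - m) p = phase j k p - phase l m p"
  by (simp_all add: phase_def algebra_simps)

lemma trig_eval_term_mult: "trig_eval (term_mult t u) p = trig_eval [t] p * trig_eval [u] p"
proof -
  obtain c j k s d l m r where "t = (c, j, k, s)" "u = (d, l, m, r)" by (cases t, cases u) auto
  then show ?thesis
    by (cases s; cases r) (simp_all add: fourier_mode_def phase_add phase_diff cos_add cos_diff
        sin_add sin_diff algebra_simps)
qed

lemma trig_eval_mult: "trig_eval (trig_mult P Q) p = trig_eval P p * trig_eval Q p"
proof -
  have "trig_eval (concat Ls) p = (\<Sum>L\<leftarrow>Ls. trig_eval L p)" for Ls
    by (induction Ls) (auto simp: trig_eval_append)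
  then have "trig_eval (trig_mult P Q) p = (\<Sum>t\<leftarrow>P. \<Sum>u\<leftarrow>Q. trig_eval [t] p * trig_eval [u] p)"
    by (simp add: trig_mult_def o_def trig_eval_term_mult)
  also have "\<dots> = trig_eval P p * trig_eval Q p"
    by (simp add: trig_eval_sum_list[of P] trig_eval_sum_list[of Q] sum_list_const_mult sum_list_mult_const)
  finally show ?thesis .
qed

lemma has_real_derivative_trig_eval_x:
  "((\<lambda>t. trig_eval P (t, y)) has_real_derivative trig_eval (trig_dx P) (x, y)) (at x)"
proof (induction P rule: trig_term_induct)
  case (2 c j k s P)
  then show ?case
    by (cases s) (auto simp: trig_dx_def fourier_mode_def phase_def algebra_simps intro!: derivative_eq_intros)
qed (simp add: trig_dx_def)

lemma has_real_derivative_trig_eval_y: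
  "((\<lambda>t. trig_eval P (x, t)) has_real_derivative trig_eval (trig_dy P) (x, y)) (at y)"
proof (induction P rule: trig_term_induct)
  case (2 c j k s P)
  then show ?case
    by (cases s) (auto simp: trig_dy_def fourier_mode_def phase_def algebra_simps intro!: derivative_eq_intros)
qed (simp add: trig_dy_def)

lemma dx_trig_eval: "dx (trig_eval P) = trig_eval (trig_dx P)"
  by (rule ext, rule dx_eqI) (metis has_real_derivative_trig_eval_x prod.collapse)

lemma dy_trig_eval: "dy (trig_eval P) = trig_eval (trig_dy P)"
  by (rule ext, rule dy_eqI) (metis has_real_derivative_trig_eval_y prod.collapse)

lemma differentiable_trig_eval: "trig_eval P differentiable at p"
proof (induction P rule: trig_term_induct)
  case (2 c j k s P)
  have "phase j k differentiable at p"
    unfolding phase_def[abs_def]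
    by (intro derivative_intros bounded_linear_imp_differentiable bounded_linear_fst bounded_linear_snd)
  then obtain D where "(phase j k has_derivative D) (at p)" by (auto simp: differentiable_def)
  then have "fourier_mode j k s differentiable at p"
    unfolding fourier_mode_def differentiable_def
    by (cases s) (auto intro: has_derivative_sin has_derivative_cos)
  moreover have "trig_eval ((c, j, k, s) # P) = (\<lambda>p. c * fourier_mode j k s p + trig_eval P p)"
    by (simp add: fun_eq_iff)
  ultimately show ?case
    using 2 by simp
qed simp

lemma torus_smooth_trig_eval: "torus_smooth (trig_eval P)"
proof -
  have "smooth2 (trig_eval P)"
    by (rule smooth2_coinduct[where C = "range trig_eval"])
      (auto simp: dx_trig_eval dy_trig_eval differentiable_trig_eval)
  moreover have "periodic2 (trig_eval P)"
    unfolding periodic2_def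
  proof (intro allI)
    fix x y
    show "trig_eval P (x + 1, y) = trig_eval P (x, y) \<and> trig_eval P (x, y + 1) = trig_eval P (x, y)"
    proof (induction P rule: trig_term_induct)
      case (2 c j k s P)
      have "phase j k (x + 1, y) = phase j k (x, y) + 2 * pi * of_int j"
        "phase j k (x, y + 1) = phase j k (x, y) + 2 * pi * of_int k"
        by (simp_all add: phase_def algebra_simps)
      with 2 show ?case by (simp add: fourier_mode_def cos_add sin_add)
    qed simp
  qed
  ultimately show ?thesis by (simp add: torus_smooth_def)
qed

lemma integral_fourier_mode:
  "integral unit_square (fourier_mode j k s) = (if j = 0 \<and> k = 0 \<and> \<not> s then 1 else 0)"
proof -
  consider "j \<noteq> 0" | "j = 0" "k \<noteq> 0" | "j = 0" "k = 0" by blast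
  then show ?thesis
  proof cases
    case 1
    define a where "a = 1 / (2 * pi * of_int j)"
    have "fourier_mode j k s = dx (trig_eval [(if s then - a else a, j, k, \<not> s)])"
      using 1 by (auto simp: dx_trig_eval trig_dx_def a_def fun_eq_iff)
    then show ?thesis using 1 by (simp add: integral_dx_eq_0 torus_smooth_trig_eval)
  next
    case 2
    define a where "a = 1 / (2 * pi * of_int k)"
    have "fourier_mode j k s = dy (trig_eval [(if s then - a else a, j, k, \<not> s)])"
      using 2 by (auto simp: dy_trig_eval trig_dy_def a_def fun_eq_iff)
    then show ?thesis using 2 by (simp add: integral_dy_eq_0 torus_smooth_trig_eval)
  next
    case 3
    then have "fourier_mode j k s = (\<lambda>p. if s then 0 else 1)"
      by (simp add: fourier_mode_def phase_def fun_eq_iff)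
    then show ?thesis using 3 by (simp add: content_Pair)
  qed
qed

fun term_integral :: "trig_term \<Rightarrow> real" where
  "term_integral (c, j, k, s) = (if j = 0 \<and> k = 0 \<and> \<not> s then c else 0)"

definition trig_integral :: "trig_term list \<Rightarrow> real" where
  "trig_integral P = sum_list (map term_integral P)"

lemma integral_trig_eval: "integral unit_square (trig_eval P) = trig_integral P"
proof (induction P rule: trig_term_induct)
  case (2 c j k s P)
  have "trig_eval ((c, j, k, s) # P) = (\<lambda>p. c * fourier_mode j k s p + trig_eval P p)"
    by auto
  moreover have "fourier_mode j k s = trig_eval [(1, j, k, s)]"
    by auto
  ultimately have "integral unit_square (trig_eval ((c, j, k, s) # P)) =
      c * integral unit_square (fourier_mode j k s) + integral unit_square (trig_eval P)"
    by (simp add: integral_add_torus torus_smooth_trig_eval torus_smooth_cmult del: trig_eval.simps)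
  with 2 show ?case
    by (simp add: integral_fourier_mode trig_integral_def del: trig_eval.simps)
qed (simp add: trig_integral_def)

text \<open>Since cos and sin are even and odd, every term can be normalised so that its frequency
  (j, k) is lexicographically nonnegative; two polynomials agree if their normalised
  coefficients do, except possibly at the vanishing mode sin 0.\<close>
fun term_canon :: "trig_term \<Rightarrow> trig_term" where
  "term_canon (c, j, k, s) =
    (if j < 0 \<or> (j = 0 \<and> k < 0) then (if s then - c else c, - j, - k, s) else (c, j, k, s))"

definition term_key :: "trig_term \<Rightarrow> int \<times> int \<times> bool" where
  "term_key t = snd (term_canon t)"

definition term_coeff :: "trig_term \<Rightarrow> real" where
  "term_coeff t = fst (term_canon t)"

definition trig_coeff :: "trig_term list \<Rightarrow> int \<times> int \<times> bool \<Rightarrow> real" where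
  "trig_coeff P q = (\<Sum>t\<leftarrow>P. if term_key t = q then term_coeff t else 0)"

fun key_mode :: "int \<times> int \<times> bool \<Rightarrow> pt \<Rightarrow> real" where
  "key_mode (j, k, s) = fourier_mode j k s"

lemma trig_eval_single_canon: "trig_eval [t] p = term_coeff t * key_mode (term_key t) p"
proof -
  obtain c j k s where t: "t = (c, j, k, s)" by (cases t) auto
  have "phase (- j) (- k) p = - phase j k p" by (simp add: phase_def algebra_simps)
  then show ?thesis by (simp add: t term_coeff_def term_key_def fourier_mode_def)
qed

lemma trig_eval_coeff:
  assumes "finite K" "term_key ` set P \<subseteq> K"
  shows "trig_eval P p = (\<Sum>q\<in>K. trig_coeff P q * key_mode q p)"
  using assms(2)
proof (induction P)
  case (Cons t P)
  have "trig_eval (t # P) p = trig_eval [t] p + trig_eval P p"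
    using trig_eval_append[of "[t]" P p] by simp
  also have "trig_eval [t] p = (\<Sum>q\<in>K. if term_key t = q then term_coeff t * key_mode q p else 0)"
    using Cons.prems assms(1) by (simp add: trig_eval_single_canon)
  also have "\<dots> = (\<Sum>q\<in>K. (if term_key t = q then term_coeff t else 0) * key_mode q p)"
    by (rule sum.cong) auto
  finally show ?case
    using Cons by (simp add: trig_coeff_def distrib_right sum.distrib)
qed (simp add: trig_coeff_def)

lemma trig_eval_eqI:
  assumes "\<forall>q \<in> term_key ` set (P @ Q). q \<noteq> (0, 0, True) \<longrightarrow> trig_coeff P q = trig_coeff Q q"
  shows "trig_eval P = trig_eval Q"
proof
  fix p
  let ?K = "term_key ` set (P @ Q)"
  have "trig_eval P p = (\<Sum>q\<in>?K. trig_coeff P q * key_mode q p)"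
    by (rule trig_eval_coeff) auto
  also have "\<dots> = (\<Sum>q\<in>?K. trig_coeff Q q * key_mode q p)"
  proof (rule sum.cong)
    fix q assume "q \<in> ?K"
    then show "trig_coeff P q * key_mode q p = trig_coeff Q q * key_mode q p"
      using assms by (cases "q = (0, 0, True)") (auto simp: fourier_mode_def phase_def)
  qed simp
  also have "\<dots> = trig_eval Q p"
    by (rule trig_eval_coeff[symmetric]) auto
  finally show "trig_eval P p = trig_eval Q p" .
qed

section \<open>Curvature on trigonometric polynomials\<close>

definition trig_laplace :: "trig_term list \<Rightarrow> trig_term list" where
  "trig_laplace P = trig_dx (trig_dx P) @ trig_dy (trig_dy P)"

definition trig_poisson :: "trig_term list \<Rightarrow> trig_term list \<Rightarrow> trig_term list" where
  "trig_poisson P Q = trig_mult (trig_dx P) (trig_dy Q) @ trig_scale (- 1) (trig_mult (trig_dy P) (trig_dx Q))"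

definition trig_koszul_rhs :: "trig_term list \<Rightarrow> trig_term list \<Rightarrow> trig_term list" where
  "trig_koszul_rhs P Q = trig_laplace (trig_laplace (trig_poisson P Q))
     @ trig_poisson P (trig_laplace (trig_laplace Q)) @ trig_poisson Q (trig_laplace (trig_laplace P))"

lemma laplace_trig_eval: "laplace (trig_eval P) = trig_eval (trig_laplace P)"
  by (simp add: laplace_def[abs_def] trig_laplace_def dx_trig_eval dy_trig_eval trig_eval_append fun_eq_iff)

lemma poisson_trig_eval: "poisson (trig_eval P) (trig_eval Q) = trig_eval (trig_poisson P Q)"
  by (simp add: poisson_def[abs_def] trig_poisson_def dx_trig_eval dy_trig_eval trig_eval_append
      trig_eval_scale trig_eval_mult fun_eq_iff)

lemma koszul_rhs_trig_eval: "koszul_rhs (trig_eval P) (trig_eval Q) = trig_eval (trig_koszul_rhs P Q)"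
  by (simp add: koszul_rhs_def[abs_def] trig_koszul_rhs_def laplace_trig_eval poisson_trig_eval
      trig_eval_append fun_eq_iff)

definition is_LC_stream :: "trig_term list \<Rightarrow> trig_term list \<Rightarrow> trig_term list \<Rightarrow> bool" where
  "is_LC_stream P Q R \<longleftrightarrow>
    trig_eval (trig_scale 2 (trig_laplace (trig_laplace R))) = trig_eval (trig_koszul_rhs P Q)"

lemma LC_trig_eval:
  assumes "c \<noteq> 0" "is_LC_stream P Q R"
  shows "LC c (sgrad (trig_eval P)) (sgrad (trig_eval Q)) = sgrad (trig_eval R)"
proof (rule LC_sgrad[OF assms(1) torus_smooth_trig_eval torus_smooth_trig_eval torus_smooth_trig_eval])
  fix p
  show "2 * laplace (laplace (trig_eval R)) p = koszul_rhs (trig_eval P) (trig_eval Q) p"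
    using fun_cong[OF assms(2)[unfolded is_LC_stream_def], of p]
    by (simp add: koszul_rhs_trig_eval laplace_trig_eval trig_eval_scale)
qed

lemma vbracket_trig_eval:
  "vbracket (sgrad (trig_eval P)) (sgrad (trig_eval Q)) = sgrad (trig_eval (trig_poisson P Q))"
  by (simp add: vbracket_sgrad torus_smooth_smooth2 torus_smooth_trig_eval poisson_trig_eval)

lemma sgrad_trig_eval_diff:
  "sgrad (trig_eval P) - sgrad (trig_eval Q) = sgrad (trig_eval (P @ trig_scale (- 1) Q))"
proof -
  have "trig_eval (P @ trig_scale (- 1) Q) = (\<lambda>p. trig_eval P p - trig_eval Q p)"
    by (simp add: fun_eq_iff trig_eval_append trig_eval_scale)
  then show ?thesis
    by (simp add: sgrad_diff torus_smooth_smooth2 torus_smooth_trig_eval fun_diff_def)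
qed

lemma metric_sgrad_trig_eval:
  "metric c (sgrad (trig_eval P)) (sgrad (trig_eval Q)) =
    c * trig_integral (trig_mult (trig_laplace P) (trig_laplace Q))"
proof -
  have "(\<lambda>p. trig_eval (trig_laplace P) p * trig_eval (trig_laplace Q) p) =
      trig_eval (trig_mult (trig_laplace P) (trig_laplace Q))"
    by (simp add: fun_eq_iff trig_eval_mult)
  then show ?thesis
    by (simp add: metric_sgrad torus_smooth_smooth2 torus_smooth_trig_eval laplace_trig_eval
        integral_trig_eval)
qed

lemma curv_trig_eval:
  assumes c: "c \<noteq> 0"
    and "is_LC_stream Q Q V" "is_LC_stream P V W" "is_LC_stream P Q X" "is_LC_stream Q X Y"
    and "is_LC_stream (trig_poisson P Q) Q Z"
  shows "metric c (curv c (sgrad (trig_eval P)) (sgrad (trig_eval Q)) (sgrad (trig_eval Q))) (sgrad (trig_eval P))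
    = c * trig_integral (trig_mult (trig_laplace (W @ trig_scale (- 1) Y @ trig_scale (- 1) Z)) (trig_laplace P))"
proof -
  have "curv c (sgrad (trig_eval P)) (sgrad (trig_eval Q)) (sgrad (trig_eval Q))
      = sgrad (trig_eval W) - sgrad (trig_eval Y) - sgrad (trig_eval Z)"
    using assms by (simp add: curv_def LC_trig_eval vbracket_trig_eval)
  also have "\<dots> = sgrad (trig_eval (W @ trig_scale (- 1) Y @ trig_scale (- 1) Z))"
    by (simp add: sgrad_trig_eval_diff trig_scale_def)
  finally show ?thesis by (simp add: metric_sgrad_trig_eval)
qed

lemmas trig_defs = trig_koszul_rhs_def trig_poisson_def trig_laplace_def trig_dx_def trig_dy_def
  trig_scale_def trig_mult_def term_key_def term_coeff_def trig_coeff_def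

lemma cosmode_trig_eval: "cosmode j k = trig_eval [(1, j, k, False)]"
  by (auto simp: cosmode_def fourier_mode_def phase_def)

text \<open>The stream functions of \<nabla>_u v, \<nabla>_v \<nabla>_u v and \<nabla>_[u, v] v for two pairs of cosine modes
  u, v; in both cases \<nabla>_v v = 0, since {b, \<Delta>\<Delta>b} = 0 for a single cosine mode b.\<close>
definition stream_10_01_uv :: "trig_term list" where
  "stream_10_01_uv = [(1/4 * (2*pi)^2, 1, -1, False), (-(1/4) * (2*pi)^2, 1, 1, False)]"

definition stream_10_01_v_uv :: "trig_term list" where
  "stream_10_01_v_uv = [(-(7/100) * (2*pi)^4, 1, -2, False), (1/2 * (2*pi)^4, 1, 0, False),
    (-(7/100) * (2*pi)^4, 1, 2, False)]"

definition stream_10_01_bracket_v :: "trig_term list" where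
  "stream_10_01_bracket_v = [(11/100 * (2*pi)^4, 1, -2, False), (1/2 * (2*pi)^4, 1, 0, False),
    (11/100 * (2*pi)^4, 1, 2, False)]"

definition stream_02_13_uv :: "trig_term list" where
  "stream_02_13_uv = [(-11 * (2*pi)^2, 1, 1, False), (95/169 * (2*pi)^2, 1, 5, False)]"

definition stream_02_13_v_uv :: "trig_term list" where
  "stream_02_13_v_uv = [(-(2890/169) * (2*pi)^4, 0, 2, False), (-(209/50) * (2*pi)^4, 2, 4, False),
    (-(2375/7514) * (2*pi)^4, 2, 8, False)]"

definition stream_02_13_bracket_v :: "trig_term list" where
  "stream_02_13_bracket_v = [(14 * (2*pi)^4, 0, 2, False), (31/50 * (2*pi)^4, 2, 4, False),
    (253/578 * (2*pi)^4, 2, 8, False)]"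

lemmas stream_defs = stream_10_01_uv_def stream_10_01_v_uv_def stream_10_01_bracket_v_def
  stream_02_13_uv_def stream_02_13_v_uv_def stream_02_13_bracket_v_def

lemma is_LC_stream_trivial:
  "is_LC_stream [(1, 0, 1, False)] [(1, 0, 1, False)] []"
  "is_LC_stream [(1, 1, 3, False)] [(1, 1, 3, False)] []"
  "is_LC_stream [(1, j, k, False)] [] []"
  unfolding is_LC_stream_def by (rule trig_eval_eqI; simp add: trig_defs)+

lemma is_LC_stream_10_01_uv: "is_LC_stream [(1, 1, 0, False)] [(1, 0, 1, False)] stream_10_01_uv"
  unfolding is_LC_stream_def
  by (rule trig_eval_eqI)
    (simp add: trig_defs stream_defs; simp add: algebra_simps power2_eq_square eval_nat_numeral)

lemma is_LC_stream_10_01_v_uv: "is_LC_stream [(1, 0, 1, False)] stream_10_01_uv stream_10_01_v_uv"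
  unfolding is_LC_stream_def
  by (rule trig_eval_eqI)
    (simp add: trig_defs stream_defs; simp add: algebra_simps power2_eq_square eval_nat_numeral)

lemma is_LC_stream_10_01_bracket_v:
  "is_LC_stream (trig_poisson [(1, 1, 0, False)] [(1, 0, 1, False)]) [(1, 0, 1, False)] stream_10_01_bracket_v"
  unfolding is_LC_stream_def
  by (rule trig_eval_eqI)
    (simp add: trig_defs stream_defs; simp add: algebra_simps power2_eq_square eval_nat_numeral)

lemma is_LC_stream_02_13_uv: "is_LC_stream [(1, 0, 2, False)] [(1, 1, 3, False)] stream_02_13_uv"
  unfolding is_LC_stream_def
  by (rule trig_eval_eqI)
    (simp add: trig_defs stream_defs; simp add: algebra_simps power2_eq_square eval_nat_numeral)

lemma is_LC_stream_02_13_v_uv: "is_LC_stream [(1, 1, 3, False)] stream_02_13_uv stream_02_13_v_uv"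
  unfolding is_LC_stream_def
  by (rule trig_eval_eqI)
    (simp add: trig_defs stream_defs; simp add: algebra_simps power2_eq_square eval_nat_numeral)

lemma is_LC_stream_02_13_bracket_v:
  "is_LC_stream (trig_poisson [(1, 0, 2, False)] [(1, 1, 3, False)]) [(1, 1, 3, False)] stream_02_13_bracket_v"
  unfolding is_LC_stream_def
  by (rule trig_eval_eqI)
    (simp add: trig_defs stream_defs; simp add: algebra_simps power2_eq_square eval_nat_numeral)

lemma curvature_cosmode_10_01:
  assumes "c \<noteq> 0"
  shows "metric c (curv c (sgrad (cosmode 1 0)) (sgrad (cosmode 0 1)) (sgrad (cosmode 0 1))) (sgrad (cosmode 1 0))
    = - c * (2 * pi) ^ 8 / 2"
  unfolding cosmode_trig_eval
  by (subst curv_trig_eval[OF assms is_LC_stream_trivial(1,3) is_LC_stream_10_01_uv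
        is_LC_stream_10_01_v_uv is_LC_stream_10_01_bracket_v])
    (simp add: trig_defs trig_integral_def stream_defs;
      simp add: algebra_simps power2_eq_square eval_nat_numeral)

lemma curvature_cosmode_02_13:
  assumes "c \<noteq> 0"
  shows "metric c (curv c (sgrad (cosmode 0 2)) (sgrad (cosmode 1 3)) (sgrad (cosmode 1 3))) (sgrad (cosmode 0 2))
    = c * (4192 / 169) * (2 * pi) ^ 8"
  unfolding cosmode_trig_eval
  by (subst curv_trig_eval[OF assms is_LC_stream_trivial(2,3) is_LC_stream_02_13_uv
        is_LC_stream_02_13_v_uv is_LC_stream_02_13_bracket_v])
    (simp add: trig_defs trig_integral_def stream_defs;
      simp add: algebra_simps power2_eq_square eval_nat_numeral)

theorem corollary7p5:
  fixes c :: real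
  assumes "c > 0"
  shows "(\<exists>j k l m :: int.
            metric c (curv c (sgrad (cosmode j k)) (sgrad (cosmode l m)) (sgrad (cosmode l m)))
                     (sgrad (cosmode j k)) > 0)
       \<and> (\<exists>j k l m :: int.
            metric c (curv c (sgrad (cosmode j k)) (sgrad (cosmode l m)) (sgrad (cosmode l m)))
                     (sgrad (cosmode j k)) < 0)"
proof -
  have "c \<noteq> 0" using assms by simp
  then have "metric c (curv c (sgrad (cosmode 0 2)) (sgrad (cosmode 1 3)) (sgrad (cosmode 1 3)))
        (sgrad (cosmode 0 2)) > 0"
    and "metric c (curv c (sgrad (cosmode 1 0)) (sgrad (cosmode 0 1)) (sgrad (cosmode 0 1)))
        (sgrad (cosmode 1 0)) < 0"
    using assms by (simp_all add: curvature_cosmode_02_13 curvature_cosmode_10_01)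
  then show ?thesis by blast
qed

end
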